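(* Let $G_1$ be a connected graph on $n_1$ vertices and $m_1$ edges, and let $G_2$ be an $r_2$-regular graph on $n_2$ vertices and $m_2$ edges with Laplacian eigenvalues $\mu_1(G_2),\dots,\mu_{n_2}(G_2)$. Then \begin{align*} Kf(G_1\diamondsuit G_2)&=n_1(1+n_2+m_2)\Big[\frac{n_1m_2}{2}+\frac{n_1}{2}\Big(2r_2\sum_{i=1}^{n_2}\frac{1}{\mu_i(G_2)+2}-\sum_{i=1}^{n_2}\frac{\mu_i(G_2)}{\mu_i(G_2)+2}\Big)\\ &\qquad+2n_1\sum_{i=1}^{n_2}\frac{1}{\mu_i(G_2)+2}+\frac{m_2+n_2+1}{n_1}Kf(G_1)\Big]-\frac{n_1n_2r_2^2}{4}-\frac{5n_1m_2+2n_1n_2}{2}. \end{align*}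
   Context: All graphs are simple and undirected; the Laplacian is $L=D-A$. The resistance distance between two vertices of a connected graph is the effective resistance between them when every edge is a unit resistor, and the Kirchhoff index $Kf(G)$ of a connected graph is the sum of resistance distances over all unordered pairs of distinct vertices. The corona-vertex of the subdivision graph $G_1\diamondsuit G_2$ is obtained from $G_1$ and $|V(G_1)|$ vertex-disjoint copies of the subdivision graph $S(G_2)$ (the graph obtained from $G_2$ by inserting a new vertex into every edge) by joining the $i$-th vertex of $G_1$ to every original vertex (vertex coming from $V(G_2)$, not a subdivision vertex) of the $i$-th copy. *)

theory Defs
  imports Complex_Main "Jordan_Normal_Form.Char_Poly"
begin

definition simple_graph :: "'a set \<Rightarrow> ('a \<Rightarrow> 'a \<Rightarrow> bool) \<Rightarrow> bool" where
  "simple_graph V E \<longleftrightarrow> finite V \<and> (\<forall>u v. E u v \<longrightarrow> u \<in> V \<and> v \<in> V)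
     \<and> (\<forall>u v. E u v \<longrightarrow> E v u) \<and> (\<forall>u. \<not> E u u)"

definition connected_graph :: "'a set \<Rightarrow> ('a \<Rightarrow> 'a \<Rightarrow> bool) \<Rightarrow> bool" where
  "connected_graph V E \<longleftrightarrow> V \<noteq> {} \<and> (\<forall>u\<in>V. \<forall>v\<in>V. E\<^sup>*\<^sup>* u v)"

definition degree :: "'a set \<Rightarrow> ('a \<Rightarrow> 'a \<Rightarrow> bool) \<Rightarrow> 'a \<Rightarrow> nat" where
  "degree V E v = card {u \<in> V. E v u}"

definition regular_graph :: "'a set \<Rightarrow> ('a \<Rightarrow> 'a \<Rightarrow> bool) \<Rightarrow> nat \<Rightarrow> bool" where
  "regular_graph V E r \<longleftrightarrow> (\<forall>v\<in>V. degree V E v = r)"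

definition edges :: "'a set \<Rightarrow> ('a \<Rightarrow> 'a \<Rightarrow> bool) \<Rightarrow> 'a set set" where
  "edges V E = {{u, v} | u v. u \<in> V \<and> v \<in> V \<and> E u v}"

definition laplacian :: "'a set \<Rightarrow> ('a \<Rightarrow> 'a \<Rightarrow> bool) \<Rightarrow> ('a \<Rightarrow> real) \<Rightarrow> 'a \<Rightarrow> real" where
  "laplacian V E x w = real (degree V E w) * x w - (\<Sum>u\<in>{u \<in> V. E w u}. x u)"

definition laplacian_mat :: "'a set \<Rightarrow> ('a \<Rightarrow> 'a \<Rightarrow> bool) \<Rightarrow> (nat \<Rightarrow> 'a) \<Rightarrow> nat \<Rightarrow> real mat" where
  "laplacian_mat V E f n = mat n n (\<lambda>(i, j).
     (if i = j then real (degree V E (f i)) else 0) - (if E (f i) (f j) then 1 else 0))"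

text \<open>Resistance distance (unit resistors): inject unit current at u, extract it at v;
  the potential difference x u - x v of any solution of L x = e_u - e_v.\<close>
definition resistance :: "'a set \<Rightarrow> ('a \<Rightarrow> 'a \<Rightarrow> bool) \<Rightarrow> 'a \<Rightarrow> 'a \<Rightarrow> real" where
  "resistance V E u v = (THE r. \<exists>x. (\<forall>w\<in>V. laplacian V E x w
        = (if w = u then 1 else 0) - (if w = v then 1 else 0)) \<and> r = x u - x v)"

text \<open>Kirchhoff index: sum over unordered pairs of distinct vertices, written as half the
  sum over ordered pairs of distinct vertices.\<close>
definition kirchhoff :: "'a set \<Rightarrow> ('a \<Rightarrow> 'a \<Rightarrow> bool) \<Rightarrow> real" where
  "kirchhoff V E = (\<Sum>u\<in>V. \<Sum>v\<in>V - {u}. resistance V E u v) / 2"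

text \<open>Vertices of the corona-vertex of the subdivision graph:
  CB i = vertex i of G1, CO i v = original vertex v of the i-th copy of S(G2),
  CS i e = subdivision vertex of edge e in the i-th copy.\<close>
datatype ('a, 'b) cvert = CB 'a | CO 'a 'b | CS 'a "'b set"

definition corona_V :: "'a set \<Rightarrow> 'b set \<Rightarrow> ('b \<Rightarrow> 'b \<Rightarrow> bool) \<Rightarrow> ('a, 'b) cvert set" where
  "corona_V V1 V2 E2 = CB ` V1 \<union> {CO i v | i v. i \<in> V1 \<and> v \<in> V2}
     \<union> {CS i e | i e. i \<in> V1 \<and> e \<in> edges V2 E2}"

fun corona_E0 :: "'a set \<Rightarrow> ('a \<Rightarrow> 'a \<Rightarrow> bool) \<Rightarrow> 'b set \<Rightarrow> ('b \<Rightarrow> 'b \<Rightarrow> bool)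
    \<Rightarrow> ('a, 'b) cvert \<Rightarrow> ('a, 'b) cvert \<Rightarrow> bool" where
  "corona_E0 V1 E1 V2 E2 (CB i) (CB j) = E1 i j"
| "corona_E0 V1 E1 V2 E2 (CB i) (CO j v) = (i = j \<and> i \<in> V1 \<and> v \<in> V2)"
| "corona_E0 V1 E1 V2 E2 (CO i v) (CS j e) = (i = j \<and> i \<in> V1 \<and> e \<in> edges V2 E2 \<and> v \<in> e)"
| "corona_E0 V1 E1 V2 E2 _ _ = False"

definition corona_E :: "'a set \<Rightarrow> ('a \<Rightarrow> 'a \<Rightarrow> bool) \<Rightarrow> 'b set \<Rightarrow> ('b \<Rightarrow> 'b \<Rightarrow> bool)
    \<Rightarrow> ('a, 'b) cvert \<Rightarrow> ('a, 'b) cvert \<Rightarrow> bool" where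
  "corona_E V1 E1 V2 E2 x y \<longleftrightarrow> corona_E0 V1 E1 V2 E2 x y \<or> corona_E0 V1 E1 V2 E2 y x"

end

theory Submission
  imports Defs "Jordan_Normal_Form.Schur_Decomposition"
begin

text \<open>A unit current entering the corona graph at a vertex u of the i-th copy and leaving at the
  base vertex i stays inside that copy, and its potential P_u is given explicitly by the Green
  function K = (L(G2) + 2I)^-1. Superposing two such potentials with the potential of G1 lifted
  to the copies gives R(u, v) = P_u(u) - P_v(u) - P_u(v) + P_v(v) + R1(i, j). Summing over all
  pairs, the Kirchhoff index is expressed through the diagonal and the total sum of the potentials,
  which regularity of G2 reduces to the trace of K; by triangularising L(G2), that trace is the sum
  of the 1/(\<mu>_i + 2).\<close>

section \<open>Laplacians of simple graphs\<close>

definition neighbours :: "'a set \<Rightarrow> ('a \<Rightarrow> 'a \<Rightarrow> bool) \<Rightarrow> 'a \<Rightarrow> 'a set" where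
  "neighbours V E w = {u \<in> V. E w u}"

definition laplacian_coeff :: "'a set \<Rightarrow> ('a \<Rightarrow> 'a \<Rightarrow> bool) \<Rightarrow> 'a \<Rightarrow> 'a \<Rightarrow> real" where
  "laplacian_coeff V E a b = (if a = b then real (degree V E a) else 0) - (if E a b then 1 else 0)"

lemma simple_graph_finite: "simple_graph V E \<Longrightarrow> finite V"
  by (simp add: simple_graph_def)

lemma finite_neighbours: "finite V \<Longrightarrow> finite (neighbours V E w)"
  by (simp add: neighbours_def)

lemma laplacian_eq_sum_neighbours:
  assumes "finite V"
  shows "laplacian V E x w = (\<Sum>u\<in>neighbours V E w. x w - x u)"
  using assms by (simp add: laplacian_def degree_def neighbours_def sum_subtractf)

lemma laplacian_regular:
  assumes "regular_graph V E r" "w \<in> V"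
  shows "laplacian V E x w = real r * x w - (\<Sum>u\<in>neighbours V E w. x u)"
  using assms by (simp add: laplacian_def regular_graph_def neighbours_def)

lemma laplacian_add: "laplacian V E (\<lambda>w. x w + y w) w = laplacian V E x w + laplacian V E y w"
  by (simp add: laplacian_def sum.distrib algebra_simps)

lemma laplacian_diff: "laplacian V E (\<lambda>w. x w - y w) w = laplacian V E x w - laplacian V E y w"
  by (simp add: laplacian_def sum_subtractf algebra_simps)

lemma laplacian_eq_sum_coeff:
  assumes "finite V" "a \<in> V"
  shows "laplacian V E x a = (\<Sum>b\<in>V. laplacian_coeff V E a b * x b)"
proof -
  have "(\<Sum>b\<in>V. laplacian_coeff V E a b * x b)
      = (\<Sum>b\<in>V. (if a = b then real (degree V E a) * x b else 0) - (if E a b then x b else 0))"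
    by (intro sum.cong) (auto simp: laplacian_coeff_def left_diff_distrib)
  also have "\<dots> = (\<Sum>b\<in>V. if a = b then real (degree V E a) * x b else 0)
      - (\<Sum>b\<in>V. if E a b then x b else 0)"
    by (simp add: sum_subtractf)
  also have "\<dots> = real (degree V E a) * x a - (\<Sum>b\<in>{b\<in>V. E a b}. x b)"
    using assms by (simp add: sum.inter_filter[symmetric])
  finally show ?thesis by (simp add: laplacian_def)
qed

lemma sum_neighbours_swap:
  assumes "simple_graph V E"
  shows "(\<Sum>w\<in>V. \<Sum>u\<in>neighbours V E w. g w u) = (\<Sum>u\<in>V. \<Sum>w\<in>neighbours V E u. g w u)"
proof -
  have fin: "finite V" using assms by (rule simple_graph_finite)
  have "(\<Sum>w\<in>V. \<Sum>u\<in>{u\<in>V. E w u}. g w u) = (\<Sum>u\<in>V. \<Sum>w\<in>{w\<in>V. E w u}. g w u)"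
    by (rule sum.swap_restrict[OF fin fin])
  moreover have "{w\<in>V. E w u} = neighbours V E u" for u
    using assms unfolding simple_graph_def neighbours_def by blast
  ultimately show ?thesis by (simp add: neighbours_def)
qed

lemma sum_laplacian_eq_0:
  assumes "simple_graph V E"
  shows "(\<Sum>w\<in>V. laplacian V E x w) = 0"
  using sum_neighbours_swap[OF assms, of "\<lambda>w u. x u"]
  by (simp add: laplacian_eq_sum_neighbours[OF simple_graph_finite[OF assms]] sum_subtractf)

lemma laplacian_quadratic_form:
  assumes "simple_graph V E"
  shows "(\<Sum>w\<in>V. z w * laplacian V E z w) = (\<Sum>w\<in>V. \<Sum>u\<in>neighbours V E w. (z w - z u)\<^sup>2) / 2"
proof -
  have lap: "(\<Sum>w\<in>V. z w * laplacian V E z w) = (\<Sum>w\<in>V. \<Sum>u\<in>neighbours V E w. z w * (z w - z u))"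
    by (simp add: laplacian_eq_sum_neighbours[OF simple_graph_finite[OF assms]] sum_distrib_left)
  also have "\<dots> = (\<Sum>w\<in>V. \<Sum>u\<in>neighbours V E w. z u * (z u - z w))"
    using sum_neighbours_swap[OF assms, of "\<lambda>w u. z u * (z u - z w)"] by simp
  finally have "2 * (\<Sum>w\<in>V. z w * laplacian V E z w)
      = (\<Sum>w\<in>V. \<Sum>u\<in>neighbours V E w. z w * (z w - z u) + z u * (z u - z w))"
    using lap by (simp add: sum.distrib)
  also have "\<dots> = (\<Sum>w\<in>V. \<Sum>u\<in>neighbours V E w. (z w - z u)\<^sup>2)"
    by (simp add: power2_eq_square algebra_simps)
  finally show ?thesis by simp
qed

lemma laplacian_zero_imp_constant:
  assumes G: "simple_graph V E" "connected_graph V E"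
    and z: "\<forall>w\<in>V. laplacian V E z w = 0" and a: "a \<in> V" and b: "b \<in> V"
  shows "z a = z b"
proof -
  have fin: "finite V" using G(1) by (rule simple_graph_finite)
  have "(\<Sum>w\<in>V. \<Sum>u\<in>neighbours V E w. (z w - z u)\<^sup>2) = 0"
    using laplacian_quadratic_form[OF G(1), of z] z by simp
  then have adj: "\<forall>w\<in>V. \<forall>u\<in>neighbours V E w. z w = z u"
    by (simp add: sum_nonneg_eq_0_iff sum_nonneg fin finite_neighbours)
  have "E\<^sup>*\<^sup>* a b" using G(2) a b unfolding connected_graph_def by blast
  then have "z a = z b \<and> b \<in> V"
  proof (induction rule: rtranclp_induct)
    case base
    then show ?case using a by simp
  next
    case (step y c)
    then have "c \<in> V" using G(1) unfolding simple_graph_def by blast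
    with step adj show ?case unfolding neighbours_def by auto
  qed
  then show ?thesis by simp
qed

lemma resistance_eqI:
  assumes G: "simple_graph V E" "connected_graph V E" and u: "u \<in> V" and v: "v \<in> V"
    and x: "\<forall>w\<in>V. laplacian V E x w = (if w = u then 1 else 0) - (if w = v then 1 else 0)"
  shows "resistance V E u v = x u - x v"
  unfolding resistance_def
proof (rule the_equality)
  fix r
  assume "\<exists>y. (\<forall>w\<in>V. laplacian V E y w = (if w = u then 1 else 0) - (if w = v then 1 else 0))
    \<and> r = y u - y v"
  then obtain y where y: "\<forall>w\<in>V. laplacian V E y w = (if w = u then 1 else 0) - (if w = v then 1 else 0)"
    and r: "r = y u - y v" by blast
  have "\<forall>w\<in>V. laplacian V E (\<lambda>w. y w - x w) w = 0" using x y by (simp add: laplacian_diff)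
  from laplacian_zero_imp_constant[OF G this u v] show "r = x u - x v" using r by simp
qed (use x in blast)

lemma resistance_self:
  assumes "simple_graph V E" "connected_graph V E" "u \<in> V"
  shows "resistance V E u u = 0"
  using resistance_eqI[OF assms assms(3), of "\<lambda>_. 0"] by (simp add: laplacian_def)

lemma kirchhoff_eq_sum_all_pairs:
  assumes "simple_graph V E" "connected_graph V E"
  shows "kirchhoff V E = (\<Sum>u\<in>V. \<Sum>v\<in>V. resistance V E u v) / 2"
proof -
  have "(\<Sum>v\<in>V - {u}. resistance V E u v) = (\<Sum>v\<in>V. resistance V E u v)" if "u \<in> V" for u
    using that resistance_self[OF assms that] simple_graph_finite[OF assms(1)]
    by (simp add: sum.remove)
  then show ?thesis unfolding kirchhoff_def by simp
qed

section \<open>Solvability of Laplacian systems\<close>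

lemma mat_trivial_kernel_imp_right_inverse:
  fixes A :: "'a :: field mat"
  assumes A: "A \<in> carrier_mat n n"
    and ker: "\<And>v. v \<in> carrier_vec n \<Longrightarrow> A *\<^sub>v v = 0\<^sub>v n \<Longrightarrow> v = 0\<^sub>v n"
  obtains B where "B \<in> carrier_mat n n" "A * B = 1\<^sub>m n"
proof -
  have "det A \<noteq> 0" using ker det_0_iff_vec_prod_zero_field[OF A] by blast
  from det_non_zero_imp_unit[OF A this, unfolded Units_def, of "()"] that show ?thesis
    by (auto simp: ring_mat_def)
qed

lemma finite_linear_system_solvable:
  fixes M :: "'v \<Rightarrow> 'v \<Rightarrow> real"
  assumes fin: "finite V"
    and inj: "\<And>x. \<forall>a\<in>V. (\<Sum>b\<in>V. M a b * x b) = 0 \<Longrightarrow> \<forall>a\<in>V. x a = 0"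
  shows "\<exists>x. \<forall>a\<in>V. (\<Sum>b\<in>V. M a b * x b) = y a"
proof -
  obtain g where g: "bij_betw g {..<card V} V"
    using ex_bij_betw_nat_finite[OF fin] by (auto simp: atLeast0LessThan)
  define n where "n = card V"
  define h where "h = inv_into {..<n} g"
  have hg: "h (g j) = j" if "j < n" for j
    using g that by (simp add: h_def n_def bij_betw_def inv_into_f_f)
  have gh: "g (h a) = a" "h a < n" if "a \<in> V" for a
    using g that unfolding h_def n_def
    by (metis bij_betw_inv_into_right, metis bij_betw_def inv_into_into lessThan_iff)
  define A :: "real mat" where "A = mat n n (\<lambda>(i, j). M (g i) (g j))"
  have A: "A \<in> carrier_mat n n" by (simp add: A_def)
  have Av: "(A *\<^sub>v v) $ h a = (\<Sum>b\<in>V. M a b * v $ h b)" if "v \<in> carrier_vec n" "a \<in> V" for v a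
    using that gh sum.reindex_bij_betw[OF g, of "\<lambda>b. M a b * v $ h b"]
    by (simp add: A_def n_def scalar_prod_def hg atLeast0LessThan)
  obtain B where B: "B \<in> carrier_mat n n" and AB: "A * B = 1\<^sub>m n"
  proof (rule mat_trivial_kernel_imp_right_inverse[OF A])
    fix v :: "real vec"
    assume v: "v \<in> carrier_vec n" "A *\<^sub>v v = 0\<^sub>v n"
    have "\<forall>a\<in>V. (\<Sum>b\<in>V. M a b * v $ h b) = 0"
      using Av[OF v(1)] v(2) gh by (metis index_zero_vec(1))
    then have "\<forall>j<n. v $ j = 0"
      using inj hg g by (metis bij_betwE lessThan_iff n_def)
    then show "v = 0\<^sub>v n" using v(1) by (intro eq_vecI) auto
  qed
  define w where "w = B *\<^sub>v vec n (\<lambda>i. y (g i))"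
  have w: "w \<in> carrier_vec n" using B by (simp add: w_def)
  have "A *\<^sub>v w = vec n (\<lambda>i. y (g i))"
    using assoc_mult_mat_vec[OF A B, of "vec n (\<lambda>i. y (g i))"] AB by (simp add: w_def)
  then have "\<forall>a\<in>V. (\<Sum>b\<in>V. M a b * w $ h b) = y a"
    using Av[OF w] gh by (metis index_vec)
  then show ?thesis by (rule exI[of _ "\<lambda>b. w $ h b"])
qed

lemma laplacian_solvable:
  assumes G: "simple_graph V E" "connected_graph V E" and y: "(\<Sum>a\<in>V. y a) = 0"
  shows "\<exists>x. \<forall>a\<in>V. laplacian V E x a = y a"
proof -
  have fin: "finite V" using G(1) by (rule simple_graph_finite)
  have cpos: "real (card V) > 0"
    using G(2) fin by (simp add: connected_graph_def card_gt_0_iff)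
  have Mx: "(\<Sum>b\<in>V. (laplacian_coeff V E a b + 1) * x b) = laplacian V E x a + (\<Sum>b\<in>V. x b)"
    if "a \<in> V" for x a
    using laplacian_eq_sum_coeff[OF fin that] by (simp add: distrib_right sum.distrib)
  have sum_zero: "(\<Sum>b\<in>V. x b) = 0"
    if "\<forall>a\<in>V. laplacian V E x a + (\<Sum>b\<in>V. x b) = z a" "(\<Sum>a\<in>V. z a) = 0" for x z
  proof -
    have "(\<Sum>a\<in>V. laplacian V E x a + (\<Sum>b\<in>V. x b)) = 0" using that by simp
    then show ?thesis using cpos by (simp add: sum.distrib sum_laplacian_eq_0[OF G(1)])
  qed
  \<comment> \<open>Adding the all-ones matrix to the Laplacian kills its one-dimensional kernel.\<close>
  have "\<exists>x. \<forall>a\<in>V. (\<Sum>b\<in>V. (laplacian_coeff V E a b + 1) * x b) = y a"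
  proof (rule finite_linear_system_solvable[OF fin])
    fix x
    assume "\<forall>a\<in>V. (\<Sum>b\<in>V. (laplacian_coeff V E a b + 1) * x b) = 0"
    then have h: "\<forall>a\<in>V. laplacian V E x a + (\<Sum>b\<in>V. x b) = 0" using Mx by simp
    have s: "(\<Sum>b\<in>V. x b) = 0" using sum_zero[of x "\<lambda>_. 0"] h by simp
    show "\<forall>a\<in>V. x a = 0"
    proof
      fix a
      assume a: "a \<in> V"
      have "\<forall>w\<in>V. laplacian V E x w = 0" using h s by simp
      then have "(\<Sum>b\<in>V. x b) = (\<Sum>b\<in>V. x a)"
        using laplacian_zero_imp_constant[OF G _ _ a] by (intro sum.cong) auto
      then show "x a = 0" using s cpos by simp
    qed
  qed
  then obtain x where "\<forall>a\<in>V. laplacian V E x a + (\<Sum>b\<in>V. x b) = y a" using Mx by auto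
  with sum_zero[OF this y] show ?thesis by auto
qed

lemma resistance_potential_exists:
  assumes "simple_graph V E" "connected_graph V E" "u \<in> V" "v \<in> V"
  shows "\<exists>x. \<forall>w\<in>V. laplacian V E x w = (if w = u then 1 else 0) - (if w = v then 1 else 0)"
  using assms simple_graph_finite[OF assms(1)] by (intro laplacian_solvable) (simp_all add: sum_subtractf)

lemma shifted_laplacian_solvable:
  assumes G: "simple_graph V E" and t: "t > 0"
  shows "\<exists>x. \<forall>a\<in>V. t * x a + laplacian V E x a = y a"
proof -
  have fin: "finite V" using G by (rule simple_graph_finite)
  define M where "M a b = laplacian_coeff V E a b + (if a = b then t else 0)" for a b
  have Mx: "(\<Sum>b\<in>V. M a b * x b) = t * x a + laplacian V E x a" if "a \<in> V" for x a
    using laplacian_eq_sum_coeff[OF fin that] fin that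
    by (simp add: M_def distrib_right sum.distrib if_distrib[of "\<lambda>c. c * _"] cong: if_cong)
  have "\<exists>x. \<forall>a\<in>V. (\<Sum>b\<in>V. M a b * x b) = y a"
  proof (rule finite_linear_system_solvable[OF fin])
    fix x
    assume "\<forall>a\<in>V. (\<Sum>b\<in>V. M a b * x b) = 0"
    then have "(\<Sum>a\<in>V. x a * (t * x a + laplacian V E x a)) = 0" using Mx by simp
    then have "t * (\<Sum>a\<in>V. (x a)\<^sup>2) + (\<Sum>w\<in>V. \<Sum>u\<in>neighbours V E w. (x w - x u)\<^sup>2) / 2 = 0"
      using laplacian_quadratic_form[OF G, of x]
      by (simp add: distrib_left sum.distrib sum_distrib_left power2_eq_square mult.left_commute)
    moreover have "(\<Sum>w\<in>V. \<Sum>u\<in>neighbours V E w. (x w - x u)\<^sup>2) \<ge> 0" "(\<Sum>a\<in>V. (x a)\<^sup>2) \<ge> 0"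
      by (simp_all add: sum_nonneg)
    ultimately have "(\<Sum>a\<in>V. (x a)\<^sup>2) = 0"
      using t by (smt (verit, best) divide_nonneg_pos mult_pos_pos)
    then show "\<forall>a\<in>V. x a = 0" using fin by (simp add: sum_nonneg_eq_0_iff)
  qed
  then show ?thesis using Mx by auto
qed

section \<open>The trace of the inverse of a shifted matrix\<close>

definition mat_trace :: "'a :: comm_ring_1 mat \<Rightarrow> 'a" where
  "mat_trace A = (\<Sum>i<dim_row A. A $$ (i, i))"

lemma mat_trace_mult_comm:
  assumes "A \<in> carrier_mat n m" "B \<in> carrier_mat m n"
  shows "mat_trace (A * B) = mat_trace (B * A)"
proof -
  have "mat_trace (A * B) = (\<Sum>i<n. \<Sum>k<m. A $$ (i, k) * B $$ (k, i))"
    using assms by (simp add: mat_trace_def scalar_prod_def atLeast0LessThan)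
  also have "\<dots> = (\<Sum>k<m. \<Sum>i<n. B $$ (k, i) * A $$ (i, k))"
    by (subst sum.swap) (simp add: mult.commute)
  also have "\<dots> = mat_trace (B * A)"
    using assms by (simp add: mat_trace_def scalar_prod_def atLeast0LessThan)
  finally show ?thesis .
qed

lemma upper_triangular_mult_entry:
  assumes U: "U \<in> carrier_mat n n" "upper_triangular U" and C: "C \<in> carrier_mat n m"
    and k: "k < n" and j: "j < m" and zero: "\<And>l. k < l \<Longrightarrow> l < n \<Longrightarrow> C $$ (l, j) = 0"
  shows "(U * C) $$ (k, j) = U $$ (k, k) * C $$ (k, j)"
proof -
  have "(U * C) $$ (k, j) = (\<Sum>l<n. U $$ (k, l) * C $$ (l, j))"
    using U C k j by (simp add: scalar_prod_def atLeast0LessThan)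
  also have "\<dots> = (\<Sum>l\<in>{k}. U $$ (k, l) * C $$ (l, j))"
  proof (intro sum.mono_neutral_right ballI)
    fix l
    assume "l \<in> {..<n} - {k}"
    then have "l < k \<or> k < l" "l < n" by auto
    then show "U $$ (k, l) * C $$ (l, j) = 0" using U k zero by (auto simp: upper_triangular_def)
  qed (use k in auto)
  finally show ?thesis by simp
qed

lemma upper_triangular_right_inverse:
  fixes U C :: "'a :: field mat"
  assumes U: "U \<in> carrier_mat n n" "upper_triangular U" and C: "C \<in> carrier_mat n n"
    and UC: "U * C = 1\<^sub>m n"
  shows upper_triangular_right_inverse_lower: "\<And>k j. k < n \<Longrightarrow> j < k \<Longrightarrow> C $$ (k, j) = 0"
    and upper_triangular_right_inverse_diag: "\<And>j. j < n \<Longrightarrow> U $$ (j, j) * C $$ (j, j) = 1"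
proof -
  have "det U * det C = 1" using det_mult[OF U(1) C] UC by simp
  then have "prod_list (diag_mat U) \<noteq> 0"
    using det_upper_triangular[OF U(2,1)] by (metis mult_zero_left zero_neq_one)
  then have diag: "U $$ (k, k) \<noteq> 0" if "k < n" for k
    using U that by (auto simp: diag_mat_def prod_list_zero_iff)
  show lower: "C $$ (k, j) = 0" if "k < n" "j < k" for k j
    using that
  proof (induction "n - k" arbitrary: k rule: less_induct)
    case less
    have "U $$ (k, k) * C $$ (k, j) = (U * C) $$ (k, j)"
      using less by (intro upper_triangular_mult_entry[OF U C, symmetric]) auto
    also have "\<dots> = 0" using UC less by simp
    finally show ?case using diag[OF less(2)] by simp
  qed
  show "U $$ (j, j) * C $$ (j, j) = 1" if "j < n" for j
    using upper_triangular_mult_entry[OF U C that that] lower UC that by simp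
qed

lemma similar_upper_triangular_by_roots:
  fixes L :: "real mat"
  assumes L: "L \<in> carrier_mat n n" and cp: "char_poly L = (\<Prod>i<n. [:- mu i, 1:])"
  obtains B P Q where "B \<in> carrier_mat n n" "P \<in> carrier_mat n n" "Q \<in> carrier_mat n n"
    "P * Q = 1\<^sub>m n" "Q * P = 1\<^sub>m n" "L = P * B * Q"
    "upper_triangular B" "\<And>i. i < n \<Longrightarrow> B $$ (i, i) = mu i"
proof -
  define es where "es = map mu [0..<n]"
  have "(\<Prod>i<n. [:- mu i, 1:]) = (\<Prod>i\<leftarrow>[0..<n]. [:- mu i, 1:])"
    by (simp add: atLeast0LessThan[symmetric] prod.distinct_set_conv_list[symmetric])
  then have "char_poly L = (\<Prod>e\<leftarrow>es. [:- e, 1:])"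
    using cp by (simp add: es_def comp_def)
  moreover obtain B P Q where sd: "schur_decomposition L es = (B, P, Q)"
    by (cases "schur_decomposition L es") auto
  ultimately have sim: "similar_mat_wit L B P Q" and "upper_triangular B" "diag_mat B = es"
    using schur_decomposition[OF L] by blast+
  moreover have B: "B \<in> carrier_mat n n" using similar_mat_witD2[OF L sim] by blast
  moreover have "B $$ (i, i) = mu i" if "i < n" for i
  proof -
    have "diag_mat B ! i = es ! i" using \<open>diag_mat B = es\<close> by simp
    then show ?thesis using B that by (simp add: diag_mat_def es_def)
  qed
  ultimately show ?thesis using similar_mat_witD2[OF L sim] by (intro that[of B P Q]) simp_all
qed

lemma similar_shifted_right_inverse:
  fixes B C P Q :: "'a :: comm_ring_1 mat"
  assumes B: "B \<in> carrier_mat n n" and C: "C \<in> carrier_mat n n"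
    and P: "P \<in> carrier_mat n n" and Q: "Q \<in> carrier_mat n n"
    and PQ: "P * Q = 1\<^sub>m n" and QP: "Q * P = 1\<^sub>m n"
    and LC: "(P * B * Q + t \<cdot>\<^sub>m 1\<^sub>m n) * C = 1\<^sub>m n"
  shows "(B + t \<cdot>\<^sub>m 1\<^sub>m n) * (Q * C * P) = 1\<^sub>m n"
proof -
  define U where "U = B + t \<cdot>\<^sub>m 1\<^sub>m n"
  have U: "U \<in> carrier_mat n n" using B by (simp add: U_def)
  have "P * (t \<cdot>\<^sub>m 1\<^sub>m n) * Q = t \<cdot>\<^sub>m (P * Q)"
    using mult_smult_distrib[OF P one_carrier_mat] mult_smult_assoc_mat[OF P Q] P by simp
  then have "P * B * Q + t \<cdot>\<^sub>m 1\<^sub>m n = P * U * Q"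
    using B P Q PQ by (simp add: U_def mult_add_distrib_mat add_mult_distrib_mat[of _ n n])
  then have "Q * ((P * B * Q + t \<cdot>\<^sub>m 1\<^sub>m n) * C) * P = (Q * P) * U * (Q * C * P)"
    using P Q U C by (simp add: assoc_mult_mat[of _ n n _ n _ n])
  then have "U * (Q * C * P) = Q * ((P * B * Q + t \<cdot>\<^sub>m 1\<^sub>m n) * C) * P"
    using QP U Q C P by simp
  also have "\<dots> = 1\<^sub>m n" using LC QP Q by simp
  finally show ?thesis by (simp add: U_def)
qed

lemma trace_inverse_shifted:
  fixes L C :: "real mat"
  assumes L: "L \<in> carrier_mat n n" and cp: "char_poly L = (\<Prod>i<n. [:- mu i, 1:])"
    and C: "C \<in> carrier_mat n n" and LC: "(L + t \<cdot>\<^sub>m 1\<^sub>m n) * C = 1\<^sub>m n"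
  shows "(\<forall>i<n. mu i + t \<noteq> 0) \<and> mat_trace C = (\<Sum>i<n. 1 / (mu i + t))"
proof -
  obtain B P Q where B: "B \<in> carrier_mat n n" and P: "P \<in> carrier_mat n n"
    and Q: "Q \<in> carrier_mat n n" and PQ: "P * Q = 1\<^sub>m n" and QP: "Q * P = 1\<^sub>m n"
    and LB: "L = P * B * Q" and ut: "upper_triangular B" and diag: "\<And>i. i < n \<Longrightarrow> B $$ (i, i) = mu i"
    using similar_upper_triangular_by_roots[OF L cp] by blast
  have QCP: "Q * C * P \<in> carrier_mat n n" using Q C P by simp
  have "upper_triangular (B + t \<cdot>\<^sub>m 1\<^sub>m n)" using ut B by (auto simp: upper_triangular_def)
  with similar_shifted_right_inverse[OF B C P Q PQ QP] LC LB B QCP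
  have inv: "(mu i + t) * (Q * C * P) $$ (i, i) = 1" if "i < n" for i
    using upper_triangular_right_inverse_diag[of "B + t \<cdot>\<^sub>m 1\<^sub>m n" n "Q * C * P" i] that diag
    by simp
  have "mat_trace C = mat_trace (Q * C * P)"
    using mat_trace_mult_comm[of "Q * C" n n P] Q C P PQ
    by (simp add: assoc_mult_mat[of P n n Q n C n, symmetric])
  also have "\<dots> = (\<Sum>i<n. (Q * C * P) $$ (i, i))" using Q by (simp add: mat_trace_def)
  also have "\<dots> = (\<Sum>i<n. 1 / (mu i + t))"
    using inv by (intro sum.cong refl) (metis lessThan_iff nonzero_eq_divide_eq mult.commute
        mult_zero_left zero_neq_one)
  finally show ?thesis using inv by (metis mult_zero_left zero_neq_one)
qed

section \<open>The Green function of the shifted Laplacian\<close>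

lemma laplacian_mat_mult_entry:
  assumes fin: "finite V" and f: "bij_betw f {..<n} V" and i: "i < n" and j: "j < m"
  shows "(laplacian_mat V E f n * mat n m (\<lambda>(k, l). X (f k) l)) $$ (i, j)
    = laplacian V E (\<lambda>w. X w j) (f i)"
proof -
  have fi: "f i \<in> V" using f i by (auto dest: bij_betwE)
  have "(laplacian_mat V E f n * mat n m (\<lambda>(k, l). X (f k) l)) $$ (i, j)
      = (\<Sum>k<n. laplacian_coeff V E (f i) (f k) * X (f k) j)"
    using i j f
    by (simp add: laplacian_mat_def laplacian_coeff_def scalar_prod_def atLeast0LessThan)
      (intro sum.cong refl; auto simp: bij_betw_def inj_on_def)
  also have "\<dots> = (\<Sum>b\<in>V. laplacian_coeff V E (f i) b * X b j)"
    by (rule sum.reindex_bij_betw[OF f])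
  finally show ?thesis using laplacian_eq_sum_coeff[OF fin fi] by simp
qed

lemma green_mat_right_inverse:
  assumes fin: "finite V" and f: "bij_betw f {..<n} V"
    and K: "\<And>v a. v \<in> V \<Longrightarrow> a \<in> V \<Longrightarrow> 2 * K a v + laplacian V E (\<lambda>w. K w v) a = (if a = v then 1 else 0)"
  shows "(laplacian_mat V E f n + 2 \<cdot>\<^sub>m 1\<^sub>m n) * mat n n (\<lambda>(i, j). K (f i) (f j)) = 1\<^sub>m n"
proof -
  define Lm where "Lm = laplacian_mat V E f n"
  define Km where "Km = mat n n (\<lambda>(i, j). K (f i) (f j))"
  have Lm: "Lm \<in> carrier_mat n n" and Km: "Km \<in> carrier_mat n n"
    by (simp_all add: Lm_def laplacian_mat_def Km_def)
  have fV: "f i \<in> V" if "i < n" for i using f that by (auto dest: bij_betwE)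
  have finj: "f i = f j \<longleftrightarrow> i = j" if "i < n" "j < n" for i j
    using f that by (auto simp: bij_betw_def inj_on_def)
  have "(Lm + 2 \<cdot>\<^sub>m 1\<^sub>m n) * Km = Lm * Km + 2 \<cdot>\<^sub>m Km"
    using Lm Km mult_smult_assoc_mat[OF one_carrier_mat Km, of 2]
    by (simp add: add_mult_distrib_mat[of _ n n])
  also have "\<dots> = 1\<^sub>m n"
  proof (rule eq_matI)
    fix i j
    assume "i < dim_row (1\<^sub>m n)" "j < dim_col (1\<^sub>m n)"
    then have i: "i < n" and j: "j < n" by simp_all
    have "(Lm * Km) $$ (i, j) = laplacian V E (\<lambda>w. K w (f j)) (f i)"
      using laplacian_mat_mult_entry[OF fin f i j, of E "\<lambda>w l. K w (f l)"]
      by (simp add: Lm_def Km_def)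
    then show "(Lm * Km + 2 \<cdot>\<^sub>m Km) $$ (i, j) = 1\<^sub>m n $$ (i, j)"
      using K[OF fV[OF j] fV[OF i]] Lm Km i j finj[OF i j] by (simp add: Km_def algebra_simps)
  qed (use Lm Km in simp_all)
  finally show ?thesis by (simp add: Lm_def Km_def)
qed

lemma shifted_laplacian_green_function:
  assumes G: "simple_graph V E" and f: "bij_betw f {..<n} V"
    and cp: "char_poly (laplacian_mat V E f n) = (\<Prod>i<n. [:- mu i, 1:])"
  obtains K where
    "\<And>v a. v \<in> V \<Longrightarrow> a \<in> V \<Longrightarrow> 2 * K a v + laplacian V E (\<lambda>w. K w v) a = (if a = v then 1 else 0)"
    "(\<Sum>v\<in>V. K v v) = (\<Sum>i<n. 1 / (mu i + 2))" "\<And>i. i < n \<Longrightarrow> mu i + 2 \<noteq> 0"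
proof -
  have "\<forall>v. \<exists>x. \<forall>a\<in>V. 2 * x a + laplacian V E x a = (if a = v then 1 else 0)"
    using shifted_laplacian_solvable[OF G] by simp
  then obtain F where F: "\<And>v. \<forall>a\<in>V. 2 * F v a + laplacian V E (F v) a = (if a = v then 1 else 0)"
    by metis
  define K where "K w v = F v w" for w v
  have K: "2 * K a v + laplacian V E (\<lambda>w. K w v) a = (if a = v then 1 else 0)" if "a \<in> V" for a v
    using F that by (simp add: K_def)
  define Km where "Km = mat n n (\<lambda>(i, j). K (f i) (f j))"
  have "(\<forall>i<n. mu i + 2 \<noteq> 0) \<and> mat_trace Km = (\<Sum>i<n. 1 / (mu i + 2))"
    using trace_inverse_shifted[OF _ cp, of Km 2] green_mat_right_inverse[OF _ f, of K E] K
      simple_graph_finite[OF G] by (simp add: laplacian_mat_def Km_def)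
  moreover have "mat_trace Km = (\<Sum>v\<in>V. K v v)"
    using sum.reindex_bij_betw[OF f, of "\<lambda>v. K v v"] by (simp add: mat_trace_def Km_def)
  ultimately show ?thesis using that K by auto
qed

section \<open>The corona-vertex of the subdivision graph\<close>

fun block_of :: "('a, 'b) cvert \<Rightarrow> 'a" where
  "block_of (CB k) = k"
| "block_of (CO k v) = k"
| "block_of (CS k e) = k"

locale corona =
  fixes V1 :: "'a set" and E1 :: "'a \<Rightarrow> 'a \<Rightarrow> bool"
    and V2 :: "'b set" and E2 :: "'b \<Rightarrow> 'b \<Rightarrow> bool" and r2 :: nat
  assumes G1: "simple_graph V1 E1" "connected_graph V1 E1"
    and G2: "simple_graph V2 E2" "regular_graph V2 E2 r2"
begin

abbreviation "VH \<equiv> corona_V V1 V2 E2"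
abbreviation "EH \<equiv> corona_E V1 E1 V2 E2"
abbreviation "ED \<equiv> edges V2 E2"
abbreviation "N1 \<equiv> neighbours V1 E1"
abbreviation "N2 \<equiv> neighbours V2 E2"

lemma finite_V1: "finite V1" and finite_V2: "finite V2"
  using G1(1) G2(1) by (simp_all add: simple_graph_finite)

lemma E1_in_V1: "E1 a b \<Longrightarrow> a \<in> V1 \<and> b \<in> V1" and E1_sym: "E1 a b \<Longrightarrow> E1 b a"
  and E1_irrefl: "\<not> E1 a a"
  using G1(1) by (simp_all add: simple_graph_def)

lemma E2_in_V2: "E2 a b \<Longrightarrow> a \<in> V2 \<and> b \<in> V2" and E2_sym: "E2 a b \<Longrightarrow> E2 b a"
  and E2_irrefl: "\<not> E2 a a"
  using G2(1) by (simp_all add: simple_graph_def)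

lemma doubleton_in_edges: "E2 a b \<Longrightarrow> {a, b} \<in> ED"
  using E2_in_V2 by (auto simp: edges_def)

lemma edgesE:
  assumes "e \<in> ED"
  obtains a b where "e = {a, b}" "E2 a b" "a \<in> V2" "b \<in> V2" "a \<noteq> b"
proof -
  from assms obtain a b where "e = {a, b}" "E2 a b" "a \<in> V2" "b \<in> V2"
    by (auto simp: edges_def)
  moreover from this have "a \<noteq> b" using E2_irrefl by auto
  ultimately show ?thesis using that by blast
qed

lemma edge_subset: "e \<in> ED \<Longrightarrow> e \<subseteq> V2"
  by (elim edgesE) auto

lemma card_edge: "e \<in> ED \<Longrightarrow> card e = 2"
  by (elim edgesE) auto

lemma finite_edges: "finite ED"
  using finite_V2 edge_subset by (auto intro: finite_subset[of _ "Pow V2"])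

lemma card_N2: "w \<in> V2 \<Longrightarrow> card (N2 w) = r2"
  using G2(2) by (simp add: regular_graph_def degree_def neighbours_def)

lemma sum_doubleton_neighbour:
  assumes "b \<in> N2 w"
  shows "(\<Sum>a\<in>{w, b}. g a) = g w + g b"
proof -
  have "w \<noteq> b" using assms E2_irrefl by (auto simp: neighbours_def)
  then show ?thesis by simp
qed

lemma EH_simps [simp]:
  "EH (CB k) (CB j) = (E1 k j \<or> E1 j k)"
  "EH (CB k) (CO j v) = (k = j \<and> k \<in> V1 \<and> v \<in> V2)"
  "EH (CB k) (CS j e) = False"
  "EH (CO k w) (CB j) = (j = k \<and> k \<in> V1 \<and> w \<in> V2)"
  "EH (CO k w) (CO j v) = False"
  "EH (CO k w) (CS j e) = (k = j \<and> k \<in> V1 \<and> e \<in> ED \<and> w \<in> e)"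
  "EH (CS k e) (CB j) = False"
  "EH (CS k e) (CO j v) = (j = k \<and> k \<in> V1 \<and> e \<in> ED \<and> v \<in> e)"
  "EH (CS k e) (CS j f) = False"
  by (auto simp: corona_E_def)

lemma VH_simps [simp]:
  "CB k \<in> VH \<longleftrightarrow> k \<in> V1"
  "CO k v \<in> VH \<longleftrightarrow> k \<in> V1 \<and> v \<in> V2"
  "CS k e \<in> VH \<longleftrightarrow> k \<in> V1 \<and> e \<in> ED"
  by (auto simp: corona_V_def)

lemma block_of_in_V1: "x \<in> VH \<Longrightarrow> block_of x \<in> V1"
  by (cases x) auto

lemma VH_eq_UN: "VH = (\<Union>k\<in>V1. insert (CB k) (CO k ` V2 \<union> CS k ` ED))"
proof (rule Set.set_eqI)
  show "x \<in> VH \<longleftrightarrow> x \<in> (\<Union>k\<in>V1. insert (CB k) (CO k ` V2 \<union> CS k ` ED))" for x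
    by (cases x) auto
qed

lemma finite_VH: "finite VH"
  unfolding VH_eq_UN using finite_V1 finite_V2 finite_edges by auto

lemma sum_VH:
  "(\<Sum>x\<in>VH. g x) = (\<Sum>k\<in>V1. g (CB k) + (\<Sum>v\<in>V2. g (CO k v)) + (\<Sum>e\<in>ED. g (CS k e)))"
proof -
  have "(\<Sum>x\<in>insert (CB k) (CO k ` V2 \<union> CS k ` ED). g x)
      = g (CB k) + (\<Sum>v\<in>V2. g (CO k v)) + (\<Sum>e\<in>ED. g (CS k e))" for k
  proof -
    have "(\<Sum>x\<in>CO k ` V2 \<union> CS k ` ED. g x) = (\<Sum>x\<in>CO k ` V2. g x) + (\<Sum>x\<in>CS k ` ED. g x)"
      using finite_V2 finite_edges by (intro sum.union_disjoint) auto
    moreover have "(\<Sum>x\<in>CO k ` V2. g x) = (\<Sum>v\<in>V2. g (CO k v))"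
      by (simp add: sum.reindex inj_on_def)
    moreover have "(\<Sum>x\<in>CS k ` ED. g x) = (\<Sum>e\<in>ED. g (CS k e))"
      by (simp add: sum.reindex inj_on_def)
    ultimately show ?thesis using finite_V2 finite_edges by (subst sum.insert) (auto simp: add.assoc)
  qed
  then show ?thesis
    unfolding VH_eq_UN using finite_V1 finite_V2 finite_edges by (subst sum.UNION_disjoint) auto
qed

lemma sum_block_of: "(\<Sum>x\<in>VH. g (block_of x)) = (1 + real (card V2) + real (card ED)) * (\<Sum>k\<in>V1. g k)"
  by (simp add: sum_VH sum_distrib_left sum_distrib_right sum.distrib algebra_simps)

lemma card_VH: "real (card VH) = real (card V1) * (1 + real (card V2) + real (card ED))"
  using sum_block_of[of "\<lambda>_. 1"] by simp

lemma simple_graph_VH: "simple_graph VH EH"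
proof -
  have "u \<in> VH \<and> v \<in> VH" if "EH u v" for u v
    using that by (cases u; cases v) (auto dest: E1_in_V1 edge_subset)
  moreover have "\<not> EH u u" for u
    by (cases u) (auto simp: E1_irrefl)
  ultimately show ?thesis unfolding simple_graph_def corona_E_def using finite_VH by blast
qed

lemma connected_to_base: "x \<in> VH \<Longrightarrow> EH\<^sup>*\<^sup>* x (CB (block_of x)) \<and> EH\<^sup>*\<^sup>* (CB (block_of x)) x"
proof (induction x)
  case (CO k v)
  then show ?case by (auto intro: r_into_rtranclp)
next
  case (CS k e)
  then obtain a where a: "a \<in> e" "a \<in> V2" by (auto elim: edgesE)
  then have "EH (CS k e) (CO k a)" "EH (CO k a) (CB k)" "EH (CB k) (CO k a)" "EH (CO k a) (CS k e)"
    using CS by auto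
  then show ?case
    by (metis block_of.simps(3) converse_rtranclp_into_rtranclp r_into_rtranclp)
qed simp

lemma connected_graph_VH: "connected_graph VH EH"
proof -
  have "E1\<^sup>*\<^sup>* i j \<Longrightarrow> EH\<^sup>*\<^sup>* (CB i) (CB j)" for i j
    by (induction rule: rtranclp_induct) (auto intro: rtranclp.rtrancl_into_rtrancl)
  then have "EH\<^sup>*\<^sup>* u v" if "u \<in> VH" "v \<in> VH" for u v
    using G1(2) connected_to_base[OF that(1)] connected_to_base[OF that(2)]
      block_of_in_V1[OF that(1)] block_of_in_V1[OF that(2)]
    unfolding connected_graph_def by (meson rtranclp_trans)
  moreover obtain k where "k \<in> V1" using G1(2) by (auto simp: connected_graph_def)
  then have "VH \<noteq> {}" by (metis VH_simps(1) empty_iff)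
  ultimately show ?thesis unfolding connected_graph_def by blast
qed

lemma incident_edges_bij:
  assumes w: "w \<in> V2"
  shows "bij_betw (\<lambda>b. {w, b}) (N2 w) {e \<in> ED. w \<in> e}"
proof (rule bij_betwI')
  fix b b'
  assume "b \<in> N2 w" "b' \<in> N2 w"
  then have "b \<noteq> w" "b' \<noteq> w" using E2_irrefl by (auto simp: neighbours_def)
  then show "({w, b} = {w, b'}) = (b = b')" by (auto simp: doubleton_eq_iff)
next
  fix b
  assume "b \<in> N2 w"
  then show "{w, b} \<in> {e \<in> ED. w \<in> e}" by (auto simp: neighbours_def doubleton_in_edges)
next
  fix e
  assume "e \<in> {e \<in> ED. w \<in> e}"
  then obtain a b where "e = {a, b}" "E2 a b" "w \<in> {a, b}" "a \<in> V2" "b \<in> V2" by (auto elim: edgesE)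
  then show "\<exists>b\<in>N2 w. e = {w, b}" using E2_sym by (auto simp: neighbours_def insert_commute)
qed

lemma sum_incident_edges: "w \<in> V2 \<Longrightarrow> (\<Sum>e\<in>{e \<in> ED. w \<in> e}. g e) = (\<Sum>b\<in>N2 w. g {w, b})"
  using sum.reindex_bij_betw[OF incident_edges_bij, of w g] by simp

lemma sum_edges_sum_ends: "(\<Sum>e\<in>ED. \<Sum>a\<in>e. F a e) = (\<Sum>a\<in>V2. \<Sum>b\<in>N2 a. F a {a, b})"
proof -
  have "(\<Sum>e\<in>ED. \<Sum>a\<in>{a \<in> V2. a \<in> e}. F a e) = (\<Sum>a\<in>V2. \<Sum>e\<in>{e \<in> ED. a \<in> e}. F a e)"
    by (rule sum.swap_restrict[OF finite_edges finite_V2])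
  moreover have "{a \<in> V2. a \<in> e} = e" if "e \<in> ED" for e
    using edge_subset[OF that] by auto
  ultimately show ?thesis by (simp add: sum_incident_edges)
qed

lemma sum_edges_sum_ends_regular: "(\<Sum>e\<in>ED. \<Sum>a\<in>e. g a) = real r2 * (\<Sum>a\<in>V2. g a)"
  by (simp add: sum_edges_sum_ends card_N2 sum_distrib_left)

lemma two_card_edges: "2 * real (card ED) = real (card V2) * real r2"
  using sum_edges_sum_ends_regular[of "\<lambda>_. 1"] by (simp add: card_edge algebra_simps)

lemma neighbours_CB: "k \<in> V1 \<Longrightarrow> neighbours VH EH (CB k) = CB ` N1 k \<union> CO k ` V2"
  by (rule Set.set_eqI, case_tac x) (auto simp: neighbours_def dest: E1_in_V1 E1_sym)

lemma neighbours_CO: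
  "k \<in> V1 \<Longrightarrow> w \<in> V2 \<Longrightarrow> neighbours VH EH (CO k w) = insert (CB k) (CS k ` {e \<in> ED. w \<in> e})"
  by (rule Set.set_eqI, case_tac x) (auto simp: neighbours_def)

lemma neighbours_CS: "k \<in> V1 \<Longrightarrow> e \<in> ED \<Longrightarrow> neighbours VH EH (CS k e) = CO k ` e"
  by (rule Set.set_eqI, case_tac x) (auto simp: neighbours_def dest: edge_subset)

lemma laplacian_CB:
  assumes "k \<in> V1"
  shows "laplacian VH EH x (CB k)
    = (\<Sum>j\<in>N1 k. x (CB k) - x (CB j)) + (\<Sum>v\<in>V2. x (CB k) - x (CO k v))"
proof -
  have "laplacian VH EH x (CB k) = (\<Sum>u\<in>CB ` N1 k \<union> CO k ` V2. x (CB k) - x u)"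
    using assms by (simp add: laplacian_eq_sum_neighbours[OF finite_VH] neighbours_CB)
  also have "\<dots> = (\<Sum>u\<in>CB ` N1 k. x (CB k) - x u) + (\<Sum>u\<in>CO k ` V2. x (CB k) - x u)"
    using finite_V1 finite_V2 by (intro sum.union_disjoint) (auto simp: finite_neighbours)
  finally show ?thesis by (simp add: sum.reindex inj_on_def)
qed

lemma laplacian_CO:
  assumes "k \<in> V1" "w \<in> V2"
  shows "laplacian VH EH x (CO k w)
    = (x (CO k w) - x (CB k)) + (\<Sum>b\<in>N2 w. x (CO k w) - x (CS k {w, b}))"
proof -
  have "laplacian VH EH x (CO k w) = (\<Sum>u\<in>insert (CB k) (CS k ` {e \<in> ED. w \<in> e}). x (CO k w) - x u)"
    using assms by (simp add: laplacian_eq_sum_neighbours[OF finite_VH] neighbours_CO)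
  also have "\<dots> = (x (CO k w) - x (CB k)) + (\<Sum>e\<in>{e \<in> ED. w \<in> e}. x (CO k w) - x (CS k e))"
    using finite_edges by (subst sum.insert) (auto simp: sum.reindex inj_on_def)
  finally show ?thesis using sum_incident_edges[OF assms(2)] by simp
qed

lemma laplacian_CS:
  assumes "k \<in> V1" "e \<in> ED"
  shows "laplacian VH EH x (CS k e) = (\<Sum>c\<in>e. x (CS k e) - x (CO k c))"
  using assms
  by (simp add: laplacian_eq_sum_neighbours[OF finite_VH] neighbours_CS sum.reindex inj_on_def)

lemma laplacian_lift_block:
  assumes "x \<in> VH"
  shows "laplacian VH EH (\<lambda>w. y (block_of w)) x = (case x of CB k \<Rightarrow> laplacian V1 E1 y k | _ \<Rightarrow> 0)"
  using assms
  by (cases x) (simp_all add: laplacian_CB laplacian_CO laplacian_CS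
      laplacian_eq_sum_neighbours[OF finite_V1])

end

section \<open>Unit potentials in the corona graph\<close>

text \<open>The potential of a unit current from a vertex u of the i-th copy to the base vertex CB i,
  grounded at CB i. It vanishes outside the copy; inside, each subdivision vertex carries the
  average of its two ends (plus half the current injected there), and eliminating the subdivision
  vertices turns Kirchhoff's equations at the original vertices into a system with matrix
  (L(G2) + 2I)/2, which is inverted by the Green function K.\<close>

definition original_potential :: "('b \<Rightarrow> 'b \<Rightarrow> real) \<Rightarrow> 'a \<Rightarrow> 'b \<Rightarrow> ('a, 'b) cvert \<Rightarrow> real" where
  "original_potential K k v x = (case x of
      CB _ \<Rightarrow> 0
    | CO k' w \<Rightarrow> if k' = k then 2 * K w v else 0
    | CS k' e \<Rightarrow> if k' = k then (\<Sum>a\<in>e. K a v) else 0)"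

definition subdivision_potential :: "('b \<Rightarrow> 'b \<Rightarrow> real) \<Rightarrow> 'a \<Rightarrow> 'b set \<Rightarrow> ('a, 'b) cvert \<Rightarrow> real"
  where
  "subdivision_potential K k e0 x = (case x of
      CB _ \<Rightarrow> 0
    | CO k' w \<Rightarrow> if k' = k then (\<Sum>a\<in>e0. K w a) else 0
    | CS k' e \<Rightarrow> if k' = k then ((if e = e0 then 1 else 0) + (\<Sum>c\<in>e. \<Sum>a\<in>e0. K c a)) / 2 else 0)"

definition unit_potential :: "('b \<Rightarrow> 'b \<Rightarrow> real) \<Rightarrow> ('a, 'b) cvert \<Rightarrow> ('a, 'b) cvert \<Rightarrow> real" where
  "unit_potential K u = (case u of
      CB _ \<Rightarrow> (\<lambda>_. 0)
    | CO k v \<Rightarrow> original_potential K k v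
    | CS k e \<Rightarrow> subdivision_potential K k e)"

locale corona_green = corona +
  fixes K :: "'b \<Rightarrow> 'b \<Rightarrow> real"
  assumes green: "\<And>v a. v \<in> V2 \<Longrightarrow> a \<in> V2
    \<Longrightarrow> 2 * K a v + laplacian V2 E2 (\<lambda>w. K w v) a = (if a = v then 1 else 0)"
begin

lemma green_regular:
  "w \<in> V2 \<Longrightarrow> v \<in> V2 \<Longrightarrow> (\<Sum>b\<in>N2 w. K b v) = (real r2 + 2) * K w v - (if w = v then 1 else 0)"
  using green[of v w] laplacian_regular[OF G2(2), of w] by (simp add: algebra_simps)

lemma green_column_sum:
  assumes "v \<in> V2"
  shows "(\<Sum>w\<in>V2. K w v) = 1 / 2"
proof -
  have "(\<Sum>w\<in>V2. 2 * K w v + laplacian V2 E2 (\<lambda>w. K w v) w) = (\<Sum>w\<in>V2. if w = v then 1 else 0)"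
    using green assms by simp
  then show ?thesis
    using assms finite_V2 by (simp add: sum.distrib sum_laplacian_eq_0[OF G2(1)] sum_distrib_left[symmetric])
qed

lemma green_edge_regular:
  assumes "w \<in> V2" "e0 \<in> ED"
  shows "(\<Sum>b\<in>N2 w. \<Sum>a\<in>e0. K b a) = (real r2 + 2) * (\<Sum>a\<in>e0. K w a) - (if w \<in> e0 then 1 else 0)"
proof -
  have "(\<Sum>b\<in>N2 w. \<Sum>a\<in>e0. K b a) = (\<Sum>a\<in>e0. \<Sum>b\<in>N2 w. K b a)"
    by (rule sum.swap)
  also have "\<dots> = (\<Sum>a\<in>e0. (real r2 + 2) * K w a - (if w = a then 1 else 0))"
    using assms edge_subset[OF assms(2)] by (intro sum.cong refl) (metis green_regular subsetD)
  also have "\<dots> = (real r2 + 2) * (\<Sum>a\<in>e0. K w a) - (if w \<in> e0 then 1 else 0)"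
    using card_edge[OF assms(2)] by (simp add: sum_subtractf sum_distrib_left card_ge_0_finite)
  finally show ?thesis .
qed

lemma green_edge_column_sum:
  assumes "e0 \<in> ED"
  shows "(\<Sum>w\<in>V2. \<Sum>a\<in>e0. K w a) = 1"
proof -
  have "(\<Sum>w\<in>V2. \<Sum>a\<in>e0. K w a) = (\<Sum>a\<in>e0. \<Sum>w\<in>V2. K w a)"
    by (rule sum.swap)
  also have "\<dots> = (\<Sum>a\<in>e0. 1 / 2)"
    using edge_subset[OF assms] green_column_sum by (intro sum.cong) auto
  finally show ?thesis using card_edge[OF assms] by simp
qed


lemma laplacian_original_potential:
  assumes k: "k \<in> V1" and v: "v \<in> V2" and x: "x \<in> VH"
  shows "laplacian VH EH (original_potential K k v) x
    = (if x = CO k v then 1 else 0) - (if x = CB k then 1 else 0)"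
proof (cases x)
  case (CB k')
  then have "laplacian VH EH (original_potential K k v) x
      = - (if k' = k then 2 * (\<Sum>w\<in>V2. K w v) else 0)"
    using x by (simp add: laplacian_CB original_potential_def sum_negf sum_distrib_left)
  then show ?thesis using CB green_column_sum[OF v] by simp
next
  case (CO k' w)
  then have k': "k' \<in> V1" and w: "w \<in> V2" using x by auto
  have "(\<Sum>b\<in>N2 w. 2 * K w v - (\<Sum>a\<in>{w, b}. K a v)) = (\<Sum>b\<in>N2 w. K w v - K b v)"
    by (intro sum.cong) (auto simp: sum_doubleton_neighbour)
  also have "\<dots> = real r2 * K w v - (\<Sum>b\<in>N2 w. K b v)"
    using card_N2[OF w] by (simp add: sum_subtractf)
  finally show ?thesis
    using CO k' w v green_regular[OF w v]
    by (auto simp: laplacian_CO original_potential_def algebra_simps)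
next
  case (CS k' e)
  then have "k' \<in> V1" "e \<in> ED" using x by auto
  then show ?thesis
    using CS by (simp add: laplacian_CS original_potential_def sum_subtractf card_edge
        sum_distrib_left[symmetric])
qed

lemma laplacian_subdivision_potential:
  assumes k: "k \<in> V1" and e0: "e0 \<in> ED" and x: "x \<in> VH"
  shows "laplacian VH EH (subdivision_potential K k e0) x
    = (if x = CS k e0 then 1 else 0) - (if x = CB k then 1 else 0)"
proof (cases x)
  case (CB k')
  then have "laplacian VH EH (subdivision_potential K k e0) x
      = - (if k' = k then (\<Sum>w\<in>V2. \<Sum>a\<in>e0. K w a) else 0)"
    using x by (simp add: laplacian_CB subdivision_potential_def sum_negf)
  then show ?thesis using CB green_edge_column_sum[OF e0] by simp
next
  case (CO k' w)
  then have k': "k' \<in> V1" and w: "w \<in> V2" using x by auto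
  define P where "P w = (\<Sum>a\<in>e0. K w a)" for w
  have "(\<Sum>b\<in>N2 w. P w - ((if {w, b} = e0 then 1 else 0) + (\<Sum>c\<in>{w, b}. P c)) / 2)
      = (\<Sum>b\<in>N2 w. P w / 2 - P b / 2 - (if {w, b} = e0 then 1 else 0) / 2)"
    by (intro sum.cong) (auto simp: sum_doubleton_neighbour field_simps)
  also have "\<dots> = real r2 * P w / 2 - (\<Sum>b\<in>N2 w. P b) / 2
      - (\<Sum>e\<in>{e \<in> ED. w \<in> e}. if e = e0 then 1 else 0) / 2"
    using card_N2[OF w] sum_incident_edges[OF w, of "\<lambda>e. if e = e0 then 1 else (0::real)"]
    by (simp add: sum_subtractf sum_divide_distrib)
  also have "\<dots> = - P w"
    using green_edge_regular[OF w e0] finite_edges e0 by (simp add: P_def algebra_simps)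
  finally show ?thesis
    using CO k' w by (auto simp: laplacian_CO subdivision_potential_def P_def)
next
  case (CS k' e)
  then have "k' \<in> V1" "e \<in> ED" using x by auto
  then show ?thesis
    using CS by (simp add: laplacian_CS subdivision_potential_def sum_subtractf card_edge
        field_simps)
qed

lemma laplacian_unit_potential:
  assumes "u \<in> VH" "x \<in> VH"
  shows "laplacian VH EH (unit_potential K u) x
    = (if x = u then 1 else 0) - (if x = CB (block_of u) then 1 else 0)"
  using assms laplacian_original_potential laplacian_subdivision_potential
  by (cases u) (auto simp: unit_potential_def laplacian_def)


section \<open>Resistances and the Kirchhoff index of the corona graph\<close>

lemma resistance_corona:
  assumes u: "u \<in> VH" and v: "v \<in> VH"
  shows "resistance VH EH u v = unit_potential K u u - unit_potential K v u - unit_potential K u v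
    + unit_potential K v v + resistance V1 E1 (block_of u) (block_of v)"
proof -
  have bu: "block_of u \<in> V1" and bv: "block_of v \<in> V1" using block_of_in_V1 u v by auto
  obtain y where y: "\<forall>w\<in>V1. laplacian V1 E1 y w
      = (if w = block_of u then 1 else 0) - (if w = block_of v then 1 else 0)"
    using resistance_potential_exists[OF G1 bu bv] by blast
  \<comment> \<open>The lifted potential of G1 cancels the currents at the base vertices of u and v.\<close>
  define Y where "Y w = unit_potential K u w - unit_potential K v w + y (block_of w)" for w
  have "laplacian VH EH Y w = (if w = u then 1 else 0) - (if w = v then 1 else 0)" if w: "w \<in> VH" for w
  proof -
    have "laplacian VH EH Y w = laplacian VH EH (unit_potential K u) w
        - laplacian VH EH (unit_potential K v) w + laplacian VH EH (\<lambda>w. y (block_of w)) w"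
      unfolding Y_def laplacian_add laplacian_diff by simp
    then show ?thesis
      using laplacian_unit_potential[OF u w] laplacian_unit_potential[OF v w]
        laplacian_lift_block[OF w] y w
      by (cases w) auto
  qed
  then have "resistance VH EH u v = Y u - Y v"
    by (intro resistance_eqI[OF simple_graph_VH connected_graph_VH u v]) blast
  moreover have "resistance V1 E1 (block_of u) (block_of v) = y (block_of u) - y (block_of v)"
    by (rule resistance_eqI[OF G1 bu bv y])
  ultimately show ?thesis by (simp add: Y_def)
qed

lemma kirchhoff_corona:
  "kirchhoff VH EH = real (card VH) * (\<Sum>u\<in>VH. unit_potential K u u)
    - (\<Sum>u\<in>VH. \<Sum>x\<in>VH. unit_potential K u x)
    + (1 + real (card V2) + real (card ED))\<^sup>2 * kirchhoff V1 E1"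
proof -
  let ?P = "unit_potential K" and ?R = "resistance V1 E1"
  have "(\<Sum>u\<in>VH. \<Sum>v\<in>VH. resistance VH EH u v)
      = (\<Sum>u\<in>VH. \<Sum>v\<in>VH. ?P u u - ?P v u - ?P u v + ?P v v + ?R (block_of u) (block_of v))"
    by (intro sum.cong refl) (simp add: resistance_corona)
  also have "\<dots> = (\<Sum>u\<in>VH. \<Sum>v\<in>VH. ?P u u) - (\<Sum>u\<in>VH. \<Sum>v\<in>VH. ?P v u)
      - (\<Sum>u\<in>VH. \<Sum>v\<in>VH. ?P u v) + (\<Sum>u\<in>VH. \<Sum>v\<in>VH. ?P v v)
      + (\<Sum>u\<in>VH. \<Sum>v\<in>VH. ?R (block_of u) (block_of v))"
    by (simp add: sum.distrib sum_subtractf)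
  also have "(\<Sum>u\<in>VH. \<Sum>v\<in>VH. ?P v u) = (\<Sum>u\<in>VH. \<Sum>v\<in>VH. ?P u v)"
    by (rule sum.swap)
  also have "(\<Sum>u\<in>VH. \<Sum>v\<in>VH. ?P u u) = real (card VH) * (\<Sum>u\<in>VH. ?P u u)"
    by (simp add: sum_distrib_right[symmetric] mult.commute)
  also have "(\<Sum>u\<in>VH. \<Sum>v\<in>VH. ?P v v) = real (card VH) * (\<Sum>u\<in>VH. ?P u u)"
    by simp
  also have "(\<Sum>u\<in>VH. \<Sum>v\<in>VH. ?R (block_of u) (block_of v))
      = (1 + real (card V2) + real (card ED))\<^sup>2 * (\<Sum>i\<in>V1. \<Sum>j\<in>V1. ?R i j)"
    using sum_block_of[of "\<lambda>i. \<Sum>j\<in>V1. ?R i j"]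
    by (simp add: sum_block_of sum_distrib_left[symmetric] power2_eq_square)
  finally show ?thesis
    unfolding kirchhoff_eq_sum_all_pairs[OF simple_graph_VH connected_graph_VH]
      kirchhoff_eq_sum_all_pairs[OF G1] by (simp add: field_simps)
qed

lemma sum_edges_green_block:
  "(\<Sum>e\<in>ED. \<Sum>c\<in>e. \<Sum>a\<in>e. K c a) = (2 * real r2 + 2) * (\<Sum>v\<in>V2. K v v) - real (card V2)"
proof -
  have "(\<Sum>e\<in>ED. \<Sum>c\<in>e. \<Sum>a\<in>e. K c a) = (\<Sum>c\<in>V2. \<Sum>b\<in>N2 c. K c c + K c b)"
    by (simp add: sum_edges_sum_ends sum_doubleton_neighbour cong: sum.cong)
  also have "\<dots> = (\<Sum>c\<in>V2. real r2 * K c c) + (\<Sum>b\<in>V2. \<Sum>c\<in>N2 b. K c b)"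
    by (simp add: sum.distrib card_N2 sum_neighbours_swap[OF G2(1), of "\<lambda>c b. K c b"])
  also have "\<dots> = (\<Sum>c\<in>V2. real r2 * K c c) + (\<Sum>b\<in>V2. (real r2 + 2) * K b b - 1)"
    by (simp add: green_regular)
  also have "\<dots> = real r2 * (\<Sum>v\<in>V2. K v v) + ((real r2 + 2) * (\<Sum>v\<in>V2. K v v) - real (card V2))"
    by (simp add: sum_subtractf sum_distrib_left)
  finally show ?thesis by (simp add: algebra_simps)
qed

lemma sum_unit_potential_diag:
  "(\<Sum>u\<in>VH. unit_potential K u u)
    = real (card V1) * ((real r2 + 3) * (\<Sum>v\<in>V2. K v v) + real (card ED) / 2 - real (card V2) / 2)"
proof -
  have "(\<Sum>u\<in>VH. unit_potential K u u) = real (card V1)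
      * ((\<Sum>v\<in>V2. 2 * K v v) + (\<Sum>e\<in>ED. (1 + (\<Sum>c\<in>e. \<Sum>a\<in>e. K c a)) / 2))"
    by (simp add: sum_VH unit_potential_def original_potential_def subdivision_potential_def)
  also have "\<dots> = real (card V1)
      * (2 * (\<Sum>v\<in>V2. K v v) + (real (card ED) + (\<Sum>e\<in>ED. \<Sum>c\<in>e. \<Sum>a\<in>e. K c a)) / 2)"
    by (simp add: sum.distrib sum_divide_distrib[symmetric] sum_distrib_left[symmetric])
  finally show ?thesis by (simp add: sum_edges_green_block field_simps)
qed

lemma sum_original_potential:
  assumes "k \<in> V1" "v \<in> V2"
  shows "(\<Sum>x\<in>VH. original_potential K k v x) = 1 + real r2 / 2"
proof -
  define A where "A = (\<Sum>w\<in>V2. 2 * K w v) + (\<Sum>e\<in>ED. \<Sum>a\<in>e. K a v)"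
  have "(\<Sum>x\<in>VH. original_potential K k v x) = (\<Sum>k'\<in>V1. if k' = k then A else 0)"
    unfolding sum_VH A_def by (intro sum.cong refl) (simp add: original_potential_def)
  also have "\<dots> = A" using finite_V1 assms by simp
  finally show ?thesis unfolding A_def
    using assms by (simp add: sum_edges_sum_ends_regular green_column_sum sum_distrib_left[symmetric])
qed

lemma sum_subdivision_potential:
  assumes "k \<in> V1" "e0 \<in> ED"
  shows "(\<Sum>x\<in>VH. subdivision_potential K k e0 x) = 3 / 2 + real r2 / 2"
proof -
  define P where "P w = (\<Sum>a\<in>e0. K w a)" for w
  define A where "A = (\<Sum>w\<in>V2. P w) + (\<Sum>e\<in>ED. ((if e = e0 then 1 else 0) + (\<Sum>c\<in>e. P c)) / 2)"
  have "(\<Sum>x\<in>VH. subdivision_potential K k e0 x) = (\<Sum>k'\<in>V1. if k' = k then A else 0)"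
    unfolding sum_VH A_def P_def by (intro sum.cong refl) (simp add: subdivision_potential_def)
  also have "\<dots> = A" using finite_V1 assms by simp
  also have "\<dots> = 1 + (1 + real r2) / 2"
    unfolding A_def
    using assms finite_edges green_edge_column_sum[OF assms(2)] sum_edges_sum_ends_regular[of P]
    by (simp add: P_def sum.distrib sum_divide_distrib[symmetric])
  finally show ?thesis by (simp add: field_simps)
qed

lemma sum_unit_potential:
  "(\<Sum>u\<in>VH. \<Sum>x\<in>VH. unit_potential K u x)
    = real (card V1) * (real (card V2) * (1 + real r2 / 2) + real (card ED) * (3 / 2 + real r2 / 2))"
  unfolding sum_VH[of "\<lambda>u. \<Sum>x\<in>VH. unit_potential K u x"]
  by (simp add: unit_potential_def sum_original_potential sum_subdivision_potential del: VH_simps)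

end

theorem corollary4p2:
  fixes V1 :: "'a set" and E1 :: "'a \<Rightarrow> 'a \<Rightarrow> bool"
    and V2 :: "'b set" and E2 :: "'b \<Rightarrow> 'b \<Rightarrow> bool"
    and n1 m1 n2 m2 r2 :: nat and f :: "nat \<Rightarrow> 'b" and mu :: "nat \<Rightarrow> real"
  assumes G1: "simple_graph V1 E1" "connected_graph V1 E1"
    and n1: "n1 = card V1" and m1: "m1 = card (edges V1 E1)"
    and G2: "simple_graph V2 E2" "regular_graph V2 E2 r2"
    and n2: "n2 = card V2" and m2: "m2 = card (edges V2 E2)"
    and f: "bij_betw f {..<n2} V2"
    and mu: "char_poly (laplacian_mat V2 E2 f n2) = (\<Prod>i<n2. [:- mu i, 1:])"
  shows "kirchhoff (corona_V V1 V2 E2) (corona_E V1 E1 V2 E2)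
    = real n1 * (1 + real n2 + real m2) *
        (real n1 * real m2 / 2
         + real n1 / 2 * (2 * real r2 * (\<Sum>i<n2. 1 / (mu i + 2)) - (\<Sum>i<n2. mu i / (mu i + 2)))
         + 2 * real n1 * (\<Sum>i<n2. 1 / (mu i + 2))
         + (real m2 + real n2 + 1) / real n1 * kirchhoff V1 E1)
      - real n1 * real n2 * (real r2)\<^sup>2 / 4
      - (5 * real n1 * real m2 + 2 * real n1 * real n2) / 2"
proof -
  interpret corona V1 E1 V2 E2 r2 using G1 G2 by unfold_locales
  obtain K where green: "\<And>v a. v \<in> V2 \<Longrightarrow> a \<in> V2
      \<Longrightarrow> 2 * K a v + laplacian V2 E2 (\<lambda>w. K w v) a = (if a = v then 1 else 0)"
    and trace: "(\<Sum>v\<in>V2. K v v) = (\<Sum>i<n2. 1 / (mu i + 2))"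
    and nonzero: "\<And>i. i < n2 \<Longrightarrow> mu i + 2 \<noteq> 0"
    using shifted_laplacian_green_function[OF G2(1) f mu] by blast
  interpret corona_green V1 E1 V2 E2 r2 K using green by unfold_locales
  define t where "t = (\<Sum>i<n2. 1 / (mu i + 2))"
  have "(\<Sum>i<n2. mu i / (mu i + 2)) = (\<Sum>i<n2. 1 - 2 * (1 / (mu i + 2)))"
    using nonzero by (intro sum.cong refl) (simp add: field_simps)
  then have sum_mu: "(\<Sum>i<n2. mu i / (mu i + 2)) = real n2 - 2 * t"
    by (simp add: sum_subtractf sum_distrib_left t_def)
  have n1_pos: "real n1 > 0" using G1 n1 finite_V1 by (auto simp: connected_graph_def card_gt_0_iff)
  have m2_eq: "real m2 = real n2 * real r2 / 2" using two_card_edges m2 n2 by simp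
  have kirchhoff_eq: "kirchhoff VH EH = real n1 * (1 + real n2 + real m2)
      * (real n1 * ((real r2 + 3) * t + real m2 / 2 - real n2 / 2))
    - real n1 * (real n2 * (1 + real r2 / 2) + real m2 * (3 / 2 + real r2 / 2))
    + (1 + real n2 + real m2)\<^sup>2 * kirchhoff V1 E1"
    using trace n1 n2 m2
    by (simp add: kirchhoff_corona card_VH sum_unit_potential_diag sum_unit_potential t_def)
  show ?thesis
    unfolding kirchhoff_eq sum_mu t_def[symmetric] m2_eq
    using n1_pos by (simp add: field_simps power2_eq_square)
qed

end
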